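(* Under the standing assumptions, if $J_g\neq\{0\}$ for every $g\in\mathcal G$, then the Galois map $\theta:H\mapsto R^{\beta_H}$, from the set of wide subgroupoids of $\mathcal G$ to the set of subalgebras of $R$ containing $R^\beta$, is injective.
   Context: All rings and algebras are associative and unital. A groupoid is a nonempty set $\mathcal G$ with a partially defined associative multiplication in which every $g$ has an inverse $g^{-1}$, a left identity $r(g)=gg^{-1}$ and a right identity $d(g)=g^{-1}g$; $gh$ is defined iff $d(g)=r(h)$; $\mathcal G_0$ is the set of identities. A subgroupoid is a nonempty subset closed under inverses and defined products; it is wide if it contains $\mathcal G_0$. Standing assumptions: $K$ commutative ring, $R$ a $K$-algebra, $\mathcal G$ a finite groupoid, $\beta=(\{E_g\},\{\beta_g\})$ a unital action of $\mathcal G$ on $R$: $E_g=E_{r(g)}$ is an ideal of $R$, unital with identity $1_g$ (so $1_{g^{-1}}=1_{d(g)}$), $\beta_g:E_{g^{-1}}\to E_g$ a $K$-algebra isomorphism, $\beta_e=\mathrm{id}_{E_e}$ for $e\in\mathcal G_0$, $\beta_g\beta_h(x)=\beta_{gh}(x)$ whenever $d(g)=r(h)$, $x\in E_{h^{-1}}$; $R=\bigoplus_{e\in\mathcal G_0}E_e$; and $R$ is a $\beta$-Galois extension of $R^\beta$: there exist $x_i,y_i\in R$ ($1\le i\le m$) with $\sum_i x_i\beta_g(y_i1_{g^{-1}})=1_g$ if $g\in\mathcal G_0$ and $=0$ otherwise. For a subgroupoid $H$, $R^{\beta_H}=\{r\in R:\beta_h(r1_{h^{-1}})=r1_h\ \forall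 h\in H\}$, and $R^\beta=R^{\beta_{\mathcal G}}$. For $g\in\mathcal G$, $J_g=\{r\in E_g: r\beta_g(x1_{g^{-1}})=xr\ \forall x\in R\}$. *)

theory Defs
  imports Main
begin

text \<open>A groupoid: a nonempty carrier G with a multiplication gmul (meaningful only
  when d g = r h) and an inversion ginv.\<close>

definition gr :: "('g \<Rightarrow> 'g \<Rightarrow> 'g) \<Rightarrow> ('g \<Rightarrow> 'g) \<Rightarrow> 'g \<Rightarrow> 'g" where
  "gr gmul ginv g = gmul g (ginv g)"

definition gd :: "('g \<Rightarrow> 'g \<Rightarrow> 'g) \<Rightarrow> ('g \<Rightarrow> 'g) \<Rightarrow> 'g \<Rightarrow> 'g" where
  "gd gmul ginv g = gmul (ginv g) g"

definition groupoid :: "'g set \<Rightarrow> ('g \<Rightarrow> 'g \<Rightarrow> 'g) \<Rightarrow> ('g \<Rightarrow> 'g) \<Rightarrow> bool" where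
  "groupoid G gmul ginv \<longleftrightarrow>
     G \<noteq> {} \<and>
     (\<forall>g\<in>G. ginv g \<in> G \<and> ginv (ginv g) = g) \<and>
     (\<forall>g\<in>G. \<forall>h\<in>G. gd gmul ginv g = gr gmul ginv h \<longrightarrow>
         gmul g h \<in> G \<and> gr gmul ginv (gmul g h) = gr gmul ginv g \<and>
         gd gmul ginv (gmul g h) = gd gmul ginv h) \<and>
     (\<forall>g\<in>G. \<forall>h\<in>G. \<forall>k\<in>G. gd gmul ginv g = gr gmul ginv h \<longrightarrow> gd gmul ginv h = gr gmul ginv k \<longrightarrow>
         gmul (gmul g h) k = gmul g (gmul h k)) \<and>
     (\<forall>g\<in>G. gmul (gr gmul ginv g) g = g \<and> gmul g (gd gmul ginv g) = g)"

definition gidents :: "'g set \<Rightarrow> ('g \<Rightarrow> 'g \<Rightarrow> 'g) \<Rightarrow> ('g \<Rightarrow> 'g) \<Rightarrow> 'g set" where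
  "gidents G gmul ginv = {gd gmul ginv g | g. g \<in> G}"

definition subgroupoid :: "'g set \<Rightarrow> ('g \<Rightarrow> 'g \<Rightarrow> 'g) \<Rightarrow> ('g \<Rightarrow> 'g) \<Rightarrow> 'g set \<Rightarrow> bool" where
  "subgroupoid G gmul ginv H \<longleftrightarrow> H \<noteq> {} \<and> H \<subseteq> G \<and>
     (\<forall>h\<in>H. ginv h \<in> H) \<and>
     (\<forall>h\<in>H. \<forall>k\<in>H. gd gmul ginv h = gr gmul ginv k \<longrightarrow> gmul h k \<in> H)"

definition wide_subgroupoid :: "'g set \<Rightarrow> ('g \<Rightarrow> 'g \<Rightarrow> 'g) \<Rightarrow> ('g \<Rightarrow> 'g) \<Rightarrow> 'g set \<Rightarrow> bool" where
  "wide_subgroupoid G gmul ginv H \<longleftrightarrow> subgroupoid G gmul ginv H \<and> gidents G gmul ginv \<subseteq> H"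

text \<open>R (the whole type 'r) is a K-algebra via the scalar multiplication smult.\<close>
definition k_algebra :: "('k::comm_ring_1 \<Rightarrow> 'r::ring_1 \<Rightarrow> 'r) \<Rightarrow> bool" where
  "k_algebra smult \<longleftrightarrow>
     (\<forall>a b x. smult (a + b) x = smult a x + smult b x) \<and>
     (\<forall>a x y. smult a (x + y) = smult a x + smult a y) \<and>
     (\<forall>a b x. smult (a * b) x = smult a (smult b x)) \<and>
     (\<forall>x. smult 1 x = x) \<and>
     (\<forall>a x y. smult a (x * y) = smult a x * y \<and> smult a (x * y) = x * smult a y)"

definition ideal_of :: "'r::ring_1 set \<Rightarrow> bool" where
  "ideal_of I \<longleftrightarrow> 0 \<in> I \<and> (\<forall>x\<in>I. \<forall>y\<in>I. x + y \<in> I) \<and> (\<forall>x\<in>I. - x \<in> I) \<and>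
     (\<forall>x\<in>I. \<forall>r. r * x \<in> I \<and> x * r \<in> I)"

text \<open>A unital action beta = ({E_g},{beta_g}) of the groupoid on R; u g is the identity 1_g of E_g.\<close>
definition unital_action ::
  "'g set \<Rightarrow> ('g \<Rightarrow> 'g \<Rightarrow> 'g) \<Rightarrow> ('g \<Rightarrow> 'g) \<Rightarrow> ('k::comm_ring_1 \<Rightarrow> 'r::ring_1 \<Rightarrow> 'r)
   \<Rightarrow> ('g \<Rightarrow> 'r set) \<Rightarrow> ('g \<Rightarrow> 'r) \<Rightarrow> ('g \<Rightarrow> 'r \<Rightarrow> 'r) \<Rightarrow> bool" where
  "unital_action G gmul ginv smult E u \<beta> \<longleftrightarrow>
     (\<forall>g\<in>G. E g = E (gr gmul ginv g)) \<and>
     (\<forall>g\<in>G. ideal_of (E g)) \<and>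
     (\<forall>g\<in>G. u g \<in> E g \<and> (\<forall>x\<in>E g. u g * x = x \<and> x * u g = x)) \<and>
     (\<forall>g\<in>G. bij_betw (\<beta> g) (E (ginv g)) (E g) \<and>
        (\<forall>x\<in>E (ginv g). \<forall>y\<in>E (ginv g).
            \<beta> g (x + y) = \<beta> g x + \<beta> g y \<and> \<beta> g (x * y) = \<beta> g x * \<beta> g y) \<and>
        (\<forall>a. \<forall>x\<in>E (ginv g). \<beta> g (smult a x) = smult a (\<beta> g x)) \<and>
        \<beta> g (u (ginv g)) = u g) \<and>
     (\<forall>e\<in>gidents G gmul ginv. \<forall>x\<in>E e. \<beta> e x = x) \<and>
     (\<forall>g\<in>G. \<forall>h\<in>G. gd gmul ginv g = gr gmul ginv h \<longrightarrow>
        (\<forall>x\<in>E (ginv h). \<beta> g (\<beta> h x) = \<beta> (gmul g h) x))"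

definition direct_sum_decomp :: "'g set \<Rightarrow> ('g \<Rightarrow> 'r::ring_1 set) \<Rightarrow> bool" where
  "direct_sum_decomp G0 E \<longleftrightarrow>
     (\<forall>x. \<exists>f. (\<forall>e\<in>G0. f e \<in> E e) \<and> x = (\<Sum>e\<in>G0. f e)) \<and>
     (\<forall>f. (\<forall>e\<in>G0. f e \<in> E e) \<and> (\<Sum>e\<in>G0. f e) = 0 \<longrightarrow> (\<forall>e\<in>G0. f e = 0))"

definition galois_ext ::
  "'g set \<Rightarrow> ('g \<Rightarrow> 'g \<Rightarrow> 'g) \<Rightarrow> ('g \<Rightarrow> 'g) \<Rightarrow> ('g \<Rightarrow> 'r::ring_1) \<Rightarrow> ('g \<Rightarrow> 'r \<Rightarrow> 'r) \<Rightarrow> bool" where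
  "galois_ext G gmul ginv u \<beta> \<longleftrightarrow>
     (\<exists>(m::nat) x y. \<forall>g\<in>G.
        (\<Sum>i\<in>{1..m}. x i * \<beta> g (y i * u (ginv g))) =
          (if g \<in> gidents G gmul ginv then u g else 0))"

definition fixed_ring :: "('g \<Rightarrow> 'g) \<Rightarrow> ('g \<Rightarrow> 'r::ring_1) \<Rightarrow> ('g \<Rightarrow> 'r \<Rightarrow> 'r) \<Rightarrow> 'g set \<Rightarrow> 'r set" where
  "fixed_ring ginv u \<beta> H = {r. \<forall>h\<in>H. \<beta> h (r * u (ginv h)) = r * u h}"

definition Jset :: "('g \<Rightarrow> 'g) \<Rightarrow> ('g \<Rightarrow> 'r::ring_1 set) \<Rightarrow> ('g \<Rightarrow> 'r) \<Rightarrow> ('g \<Rightarrow> 'r \<Rightarrow> 'r) \<Rightarrow> 'g \<Rightarrow> 'r set" where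
  "Jset ginv E u \<beta> g = {r \<in> E g. \<forall>x. r * \<beta> g (x * u (ginv g)) = x * r}"

end

theory Submission imports Defs begin

text \<open>For a wide subgroupoid H the trace tr_H(r) = \<Sum>_{h \<in> H} \<beta>_h(r 1_{h^-1}) lands in R^{\<beta>_H}.
  Take Galois coordinates x_i, y_i and suppose g \<notin> H fixes R^{\<beta>_H}. Multiplying
  \<Sum>_i x_i tr_H(y_i) by 1_{g^-1} keeps, by orthogonality of the E_e, only the h \<in> H with
  r(h) = d(g), and the Galois identity then leaves 1_{d(g)}. As g fixes every tr_H(y_i), the same
  element equals \<Sum>_i x_i \<beta>_{g^-1}(tr_H(y_i) 1_g), which regroups into Galois sums at the
  elements g^-1 h (h \<in> H); none of them is an identity, so it is 0. Thus 1_g = 0, i.e. E_g = 0,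
  which J_g \<noteq> 0 excludes. Hence H is the set of g fixing R^{\<beta>_H}.\<close>

locale groupoid_struct =
  fixes G :: "'g set" and gmul :: "'g \<Rightarrow> 'g \<Rightarrow> 'g" and ginv :: "'g \<Rightarrow> 'g"
  assumes groupoid: "groupoid G gmul ginv"
begin

abbreviation "rr \<equiv> gr gmul ginv"
abbreviation "dd \<equiv> gd gmul ginv"
abbreviation "G0 \<equiv> gidents G gmul ginv"

lemma inv_closed: "g \<in> G \<Longrightarrow> ginv g \<in> G"
  using groupoid unfolding groupoid_def by blast

lemma inv_inv: "g \<in> G \<Longrightarrow> ginv (ginv g) = g"
  using groupoid unfolding groupoid_def by blast

lemma mul_closed: "g \<in> G \<Longrightarrow> h \<in> G \<Longrightarrow> dd g = rr h \<Longrightarrow> gmul g h \<in> G"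
  using groupoid unfolding groupoid_def by blast

lemma r_mul: "g \<in> G \<Longrightarrow> h \<in> G \<Longrightarrow> dd g = rr h \<Longrightarrow> rr (gmul g h) = rr g"
  using groupoid unfolding groupoid_def by blast

lemma d_mul: "g \<in> G \<Longrightarrow> h \<in> G \<Longrightarrow> dd g = rr h \<Longrightarrow> dd (gmul g h) = dd h"
  using groupoid unfolding groupoid_def by blast

lemma mul_assoc:
  "g \<in> G \<Longrightarrow> h \<in> G \<Longrightarrow> k \<in> G \<Longrightarrow> dd g = rr h \<Longrightarrow> dd h = rr k \<Longrightarrow>
   gmul (gmul g h) k = gmul g (gmul h k)"
  using groupoid unfolding groupoid_def by blast

lemma r_mul_left: "g \<in> G \<Longrightarrow> gmul (rr g) g = g"
  using groupoid unfolding groupoid_def by blast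

lemma d_mul_right: "g \<in> G \<Longrightarrow> gmul g (dd g) = g"
  using groupoid unfolding groupoid_def by blast

lemma r_inv: "g \<in> G \<Longrightarrow> rr (ginv g) = dd g"
  by (simp add: gr_def gd_def inv_inv)

lemma d_inv: "g \<in> G \<Longrightarrow> dd (ginv g) = rr g"
  by (simp add: gr_def gd_def inv_inv)

lemma d_closed: "g \<in> G \<Longrightarrow> dd g \<in> G"
  using mul_closed[of "ginv g" g] inv_closed d_inv unfolding gd_def by simp

lemma r_d: "g \<in> G \<Longrightarrow> rr (dd g) = dd g"
  using r_mul[of "ginv g" g] inv_closed r_inv d_inv by (simp add: gd_def[of _ _ g])

lemma gidents_subset: "G0 \<subseteq> G"
  unfolding gidents_def using d_closed by auto

lemma d_in_gidents: "g \<in> G \<Longrightarrow> dd g \<in> G0"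
  unfolding gidents_def by auto

lemma r_in_gidents: "g \<in> G \<Longrightarrow> rr g \<in> G0"
  using d_in_gidents[of "ginv g"] inv_closed d_inv by simp

lemma r_gident: "e \<in> G0 \<Longrightarrow> rr e = e"
  unfolding gidents_def using r_d by auto

lemma inv_mul_cancel_left: "k \<in> G \<Longrightarrow> h \<in> G \<Longrightarrow> dd k = rr h \<Longrightarrow> gmul (ginv k) (gmul k h) = h"
  using mul_assoc[of "ginv k" k h] inv_closed d_inv r_mul_left by (simp add: gd_def[symmetric])

lemma mul_inv_cancel_left: "k \<in> G \<Longrightarrow> h \<in> G \<Longrightarrow> rr k = rr h \<Longrightarrow> gmul k (gmul (ginv k) h) = h"
  using mul_assoc[of k "ginv k" h] inv_closed d_inv r_inv r_mul_left
  by (simp add: gr_def[symmetric])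

lemma inv_mul_gident_imp_eq:
  assumes "g \<in> G" "h \<in> G" "rr g = rr h" "gmul (ginv g) h \<in> G0"
  shows "h = g"
proof -
  have comp: "dd (ginv g) = rr h" using assms d_inv by simp
  have "rr (gmul (ginv g) h) = dd g"
    using r_mul[OF inv_closed[OF assms(1)] assms(2) comp] r_inv assms by simp
  then have "gmul (ginv g) h = dd g" using r_gident assms(4) by simp
  then have "h = gmul g (dd g)" using mul_inv_cancel_left assms by metis
  then show ?thesis using d_mul_right assms by simp
qed

lemma wide_subgroupoid_subset: "wide_subgroupoid G gmul ginv H \<Longrightarrow> H \<subseteq> G"
  unfolding wide_subgroupoid_def subgroupoid_def by blast

lemma wide_subgroupoid_gidents: "wide_subgroupoid G gmul ginv H \<Longrightarrow> G0 \<subseteq> H"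
  unfolding wide_subgroupoid_def by blast

lemma wide_subgroupoid_inv: "wide_subgroupoid G gmul ginv H \<Longrightarrow> h \<in> H \<Longrightarrow> ginv h \<in> H"
  unfolding wide_subgroupoid_def subgroupoid_def by blast

lemma wide_subgroupoid_mul:
  "wide_subgroupoid G gmul ginv H \<Longrightarrow> h \<in> H \<Longrightarrow> k \<in> H \<Longrightarrow> dd h = rr k \<Longrightarrow> gmul h k \<in> H"
  unfolding wide_subgroupoid_def subgroupoid_def by blast

lemma subgroupoid_left_translation_bij:
  assumes H: "wide_subgroupoid G gmul ginv H" and k: "k \<in> H"
  shows "bij_betw (gmul k) {h \<in> H. rr h = dd k} {h \<in> H. rr h = rr k}"
proof -
  have HG: "H \<subseteq> G" using wide_subgroupoid_subset[OF H] .
  have kG: "k \<in> G" using k HG by blast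
  show ?thesis
  proof (rule bij_betw_byWitness[where f' = "gmul (ginv k)"])
    show "\<forall>h\<in>{h \<in> H. rr h = dd k}. gmul (ginv k) (gmul k h) = h"
      using inv_mul_cancel_left kG HG by auto
    show "\<forall>h\<in>{h \<in> H. rr h = rr k}. gmul k (gmul (ginv k) h) = h"
      using mul_inv_cancel_left kG HG by auto
    show "gmul k ` {h \<in> H. rr h = dd k} \<subseteq> {h \<in> H. rr h = rr k}"
      using wide_subgroupoid_mul[OF H k] r_mul[OF kG] HG by auto
    show "gmul (ginv k) ` {h \<in> H. rr h = rr k} \<subseteq> {h \<in> H. rr h = dd k}"
      using wide_subgroupoid_mul[OF H wide_subgroupoid_inv[OF H k]] r_mul[OF inv_closed[OF kG]]
        r_inv[OF kG] d_inv[OF kG] HG by auto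
  qed
qed

end


locale groupoid_action = groupoid_struct G gmul ginv
  for G :: "'g set" and gmul ginv +
  fixes smult :: "'k::comm_ring_1 \<Rightarrow> 'r::ring_1 \<Rightarrow> 'r"
    and E :: "'g \<Rightarrow> 'r set" and u :: "'g \<Rightarrow> 'r" and \<beta> :: "'g \<Rightarrow> 'r \<Rightarrow> 'r"
  assumes finite: "finite G"
    and action: "unital_action G gmul ginv smult E u \<beta>"
    and decomp: "direct_sum_decomp G0 E"
begin

lemma E_r: "g \<in> G \<Longrightarrow> E g = E (rr g)"
  using action unfolding unital_action_def by blast

lemma E_ideal: "g \<in> G \<Longrightarrow> ideal_of (E g)"
  using action unfolding unital_action_def by blast

lemma E_zero: "g \<in> G \<Longrightarrow> 0 \<in> E g"
  using E_ideal unfolding ideal_of_def by blast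

lemma E_add: "g \<in> G \<Longrightarrow> x \<in> E g \<Longrightarrow> y \<in> E g \<Longrightarrow> x + y \<in> E g"
  using E_ideal unfolding ideal_of_def by blast

lemma E_uminus: "g \<in> G \<Longrightarrow> x \<in> E g \<Longrightarrow> - x \<in> E g"
  using E_ideal unfolding ideal_of_def by blast

lemma E_mult_left: "g \<in> G \<Longrightarrow> x \<in> E g \<Longrightarrow> r * x \<in> E g"
  using E_ideal unfolding ideal_of_def by blast

lemma E_mult_right: "g \<in> G \<Longrightarrow> x \<in> E g \<Longrightarrow> x * r \<in> E g"
  using E_ideal unfolding ideal_of_def by blast

lemma unit_in_E: "g \<in> G \<Longrightarrow> u g \<in> E g"
  using action unfolding unital_action_def by blast

lemma unit_mult_left: "g \<in> G \<Longrightarrow> x \<in> E g \<Longrightarrow> u g * x = x"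
  using action unfolding unital_action_def by blast

lemma unit_mult_right: "g \<in> G \<Longrightarrow> x \<in> E g \<Longrightarrow> x * u g = x"
  using action unfolding unital_action_def by blast

lemma beta_bij: "g \<in> G \<Longrightarrow> bij_betw (\<beta> g) (E (ginv g)) (E g)"
  using action unfolding unital_action_def by blast

lemma beta_in_E: "g \<in> G \<Longrightarrow> x \<in> E (ginv g) \<Longrightarrow> \<beta> g x \<in> E g"
  using beta_bij bij_betwE by blast

lemma beta_add:
  "g \<in> G \<Longrightarrow> x \<in> E (ginv g) \<Longrightarrow> y \<in> E (ginv g) \<Longrightarrow> \<beta> g (x + y) = \<beta> g x + \<beta> g y"
  using action unfolding unital_action_def by blast

lemma beta_unit: "g \<in> G \<Longrightarrow> \<beta> g (u (ginv g)) = u g"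
  using action unfolding unital_action_def by blast

lemma beta_gident: "e \<in> G0 \<Longrightarrow> x \<in> E e \<Longrightarrow> \<beta> e x = x"
  using action unfolding unital_action_def by blast

lemma beta_comp:
  "g \<in> G \<Longrightarrow> h \<in> G \<Longrightarrow> dd g = rr h \<Longrightarrow> x \<in> E (ginv h) \<Longrightarrow> \<beta> g (\<beta> h x) = \<beta> (gmul g h) x"
  using action unfolding unital_action_def by blast

lemma E_inv: "g \<in> G \<Longrightarrow> E (ginv g) = E (dd g)"
  using E_r[OF inv_closed] r_inv by simp

lemma unit_eq_if_E_eq: "a \<in> G \<Longrightarrow> b \<in> G \<Longrightarrow> E a = E b \<Longrightarrow> u a = u b"
  by (metis unit_in_E unit_mult_left unit_mult_right)

lemma unit_r: "g \<in> G \<Longrightarrow> u g = u (rr g)"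
  using unit_eq_if_E_eq E_r gidents_subset r_in_gidents by blast

lemma unit_inv: "g \<in> G \<Longrightarrow> u (ginv g) = u (dd g)"
  using unit_eq_if_E_eq E_inv inv_closed d_closed by blast

lemma beta_zero: "g \<in> G \<Longrightarrow> \<beta> g 0 = 0"
  using beta_add[of g 0 0] E_zero[OF inv_closed] by simp

lemma sum_in_E:
  assumes "g \<in> G" "finite S" "\<forall>s\<in>S. f s \<in> E g"
  shows "sum f S \<in> E g"
  using assms(2,3) by (induction S rule: finite_induct) (auto intro: E_add E_zero assms(1))

lemma beta_sum:
  assumes "g \<in> G" "finite S" "\<And>s. s \<in> S \<Longrightarrow> f s \<in> E (ginv g)"
  shows "\<beta> g (sum f S) = (\<Sum>s\<in>S. \<beta> g (f s))"
  using assms(2,3)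
proof (induction S rule: finite_induct)
  case empty
  then show ?case using beta_zero assms(1) by simp
next
  case (insert s S)
  have "sum f S \<in> E (ginv g)"
    using insert sum_in_E[OF inv_closed[OF assms(1)]] by blast
  then show ?case using insert beta_add[OF assms(1)] by simp
qed

lemma E_disjoint:
  assumes "e \<in> G0" "f \<in> G0" "e \<noteq> f" "z \<in> E e" "z \<in> E f"
  shows "z = 0"
proof -
  define c where "c x = (if x = e then z else 0) + (if x = f then - z else 0)" for x
  have "finite G0" unfolding gidents_def using finite by simp
  moreover have "\<forall>x\<in>G0. c x \<in> E x"
    using assms gidents_subset E_zero E_uminus unfolding c_def by auto
  moreover have "sum c G0 = 0"
    using \<open>finite G0\<close> assms(1,2) by (simp add: c_def sum.distrib)
  ultimately have "c e = 0"
    using decomp assms(1) unfolding direct_sum_decomp_def by blast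
  then show ?thesis using assms(3) unfolding c_def by simp
qed

lemma mult_unit_gident:
  assumes "h \<in> G" "e \<in> G0" "z \<in> E h"
  shows "z * u e = (if rr h = e then z else 0)"
proof (cases "rr h = e")
  case True
  then show ?thesis using assms unit_mult_right E_r gidents_subset by auto
next
  case False
  have "z * u e \<in> E (rr h)" using E_mult_right assms E_r by auto
  moreover have "z * u e \<in> E e" using E_mult_left unit_in_E assms gidents_subset by blast
  ultimately show ?thesis using E_disjoint[OF r_in_gidents] assms False by auto
qed

lemma beta_term_in_E: "h \<in> G \<Longrightarrow> \<beta> h (r * u (ginv h)) \<in> E h"
  using beta_in_E E_mult_left unit_in_E inv_closed by blast

lemma beta_term_comp:
  assumes "k \<in> G" "h \<in> G" "dd k = rr h"
  shows "\<beta> k (\<beta> h (r * u (ginv h))) = \<beta> (gmul k h) (r * u (ginv (gmul k h)))"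
proof -
  have "u (ginv (gmul k h)) = u (ginv h)"
    using unit_inv mul_closed d_mul assms by simp
  then show ?thesis
    using beta_comp[OF assms] beta_term_in_E E_mult_left unit_in_E inv_closed assms(2) by metis
qed

lemma beta_sum_terms:
  assumes "k \<in> G" "finite S" "S \<subseteq> {h \<in> G. rr h = dd k}"
  shows "\<beta> k (\<Sum>h\<in>S. \<beta> h (r * u (ginv h))) = (\<Sum>h\<in>S. \<beta> (gmul k h) (r * u (ginv (gmul k h))))"
proof -
  have "\<beta> h (r * u (ginv h)) \<in> E (ginv k)" if "h \<in> S" for h
  proof -
    have "E h = E (ginv k)" using E_r E_inv assms that by auto
    then show ?thesis using beta_term_in_E assms that by auto
  qed
  then have "\<beta> k (\<Sum>h\<in>S. \<beta> h (r * u (ginv h))) = (\<Sum>h\<in>S. \<beta> k (\<beta> h (r * u (ginv h))))"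
    by (rule beta_sum[OF assms(1,2)])
  also have "\<dots> = (\<Sum>h\<in>S. \<beta> (gmul k h) (r * u (ginv (gmul k h))))"
  proof (rule sum.cong[OF refl])
    fix h assume "h \<in> S"
    then have "h \<in> G" "dd k = rr h" using assms(3) by auto
    then show "\<beta> k (\<beta> h (r * u (ginv h))) = \<beta> (gmul k h) (r * u (ginv (gmul k h)))"
      by (rule beta_term_comp[OF assms(1)])
  qed
  finally show ?thesis .
qed

definition trace :: "'g set \<Rightarrow> 'r \<Rightarrow> 'r" where
  "trace H r = (\<Sum>h\<in>H. \<beta> h (r * u (ginv h)))"

lemma trace_mult_unit:
  assumes "H \<subseteq> G" "e \<in> G0"
  shows "trace H r * u e = (\<Sum>h\<in>{h \<in> H. rr h = e}. \<beta> h (r * u (ginv h)))"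
proof -
  have "finite H" using finite assms(1) finite_subset by blast
  have "trace H r * u e = (\<Sum>h\<in>H. \<beta> h (r * u (ginv h)) * u e)"
    by (simp add: trace_def sum_distrib_right)
  also have "\<dots> = (\<Sum>h\<in>H. if rr h = e then \<beta> h (r * u (ginv h)) else 0)"
    using assms(1) by (intro sum.cong refl mult_unit_gident[OF _ assms(2) beta_term_in_E]) auto
  finally show ?thesis using \<open>finite H\<close> by (simp add: sum.inter_filter)
qed

lemma trace_in_fixed_ring:
  assumes H: "wide_subgroupoid G gmul ginv H"
  shows "trace H r \<in> fixed_ring ginv u \<beta> H"
  unfolding fixed_ring_def
proof (intro CollectI ballI)
  fix k assume k: "k \<in> H"
  have HG: "H \<subseteq> G" using wide_subgroupoid_subset[OF H] .
  have kG: "k \<in> G" using k HG by blast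
  have "finite H" using finite HG finite_subset by blast
  have "\<beta> k (trace H r * u (ginv k)) = \<beta> k (\<Sum>h\<in>{h \<in> H. rr h = dd k}. \<beta> h (r * u (ginv h)))"
    using trace_mult_unit[OF HG d_in_gidents[OF kG]] unit_inv[OF kG] by simp
  also have "\<dots> = (\<Sum>h\<in>{h \<in> H. rr h = dd k}. \<beta> (gmul k h) (r * u (ginv (gmul k h))))"
    by (rule beta_sum_terms[OF kG]) (use \<open>finite H\<close> HG in auto)
  also have "\<dots> = (\<Sum>h\<in>{h \<in> H. rr h = rr k}. \<beta> h (r * u (ginv h)))"
    using sum.reindex_bij_betw[OF subgroupoid_left_translation_bij[OF H k],
        of "\<lambda>h. \<beta> h (r * u (ginv h))"] by simp
  also have "\<dots> = trace H r * u k"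
    using trace_mult_unit[OF HG r_in_gidents[OF kG]] unit_r[OF kG] by simp
  finally show "\<beta> k (trace H r * u (ginv k)) = trace H r * u k" .
qed

definition galois_coords :: "nat \<Rightarrow> (nat \<Rightarrow> 'r) \<Rightarrow> (nat \<Rightarrow> 'r) \<Rightarrow> bool" where
  "galois_coords m x y \<longleftrightarrow> (\<forall>g\<in>G.
     (\<Sum>i\<in>{1..m}. x i * \<beta> g (y i * u (ginv g))) = (if g \<in> G0 then u g else 0))"

lemma galois_ext_iff: "galois_ext G gmul ginv u \<beta> \<longleftrightarrow> (\<exists>m x y. galois_coords m x y)"
  unfolding galois_ext_def galois_coords_def ..

lemma galois_sum_trace_mult_unit:
  assumes xy: "galois_coords m x y" and H: "wide_subgroupoid G gmul ginv H" and e: "e \<in> G0"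
  shows "(\<Sum>i\<in>{1..m}. x i * (trace H (y i) * u e)) = u e"
proof -
  have HG: "H \<subseteq> G" using wide_subgroupoid_subset[OF H] .
  have "finite H" using finite HG finite_subset by blast
  have "(\<Sum>i\<in>{1..m}. x i * (trace H (y i) * u e))
      = (\<Sum>i\<in>{1..m}. \<Sum>h\<in>{h \<in> H. rr h = e}. x i * \<beta> h (y i * u (ginv h)))"
    by (simp add: trace_mult_unit[OF HG e] sum_distrib_left)
  also have "\<dots> = (\<Sum>h\<in>{h \<in> H. rr h = e}. \<Sum>i\<in>{1..m}. x i * \<beta> h (y i * u (ginv h)))"
    by (rule sum.swap)
  also have "\<dots> = (\<Sum>h\<in>{h \<in> H. rr h = e}. if h \<in> G0 then u h else 0)"
    using xy HG unfolding galois_coords_def by (intro sum.cong) auto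
  also have "\<dots> = (\<Sum>h\<in>{h \<in> {h \<in> H. rr h = e}. h \<in> G0}. u h)"
    using \<open>finite H\<close> by (intro sum.inter_filter[symmetric]) simp
  also have "{h \<in> {h \<in> H. rr h = e}. h \<in> G0} = {e}"
    using wide_subgroupoid_gidents[OF H] e r_gident by auto
  finally show ?thesis by simp
qed

lemma galois_sum_shifted_trace:
  assumes xy: "galois_coords m x y" and H: "wide_subgroupoid G gmul ginv H"
    and g: "g \<in> G" "g \<notin> H"
  shows "(\<Sum>i\<in>{1..m}. x i * \<beta> (ginv g) (trace H (y i) * u g)) = 0"
proof -
  have HG: "H \<subseteq> G" using wide_subgroupoid_subset[OF H] .
  have "finite H" using finite HG finite_subset by blast
  let ?B = "{h \<in> H. rr h = rr g}"
  have B: "?B \<subseteq> {h \<in> G. rr h = dd (ginv g)}" using HG d_inv[OF g(1)] by auto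
  have shift: "\<beta> (ginv g) (trace H r * u g)
      = (\<Sum>h\<in>?B. \<beta> (gmul (ginv g) h) (r * u (ginv (gmul (ginv g) h))))" for r
  proof -
    have "trace H r * u g = (\<Sum>h\<in>?B. \<beta> h (r * u (ginv h)))"
      using trace_mult_unit[OF HG r_in_gidents[OF g(1)]] unit_r[OF g(1)] by simp
    then show ?thesis using beta_sum_terms[OF inv_closed[OF g(1)] _ B] \<open>finite H\<close> by simp
  qed
  have "(\<Sum>i\<in>{1..m}. x i * \<beta> (ginv g) (trace H (y i) * u g))
      = (\<Sum>i\<in>{1..m}. \<Sum>h\<in>?B. x i * \<beta> (gmul (ginv g) h) (y i * u (ginv (gmul (ginv g) h))))"
    by (simp add: shift sum_distrib_left)
  also have "\<dots> = (\<Sum>h\<in>?B. \<Sum>i\<in>{1..m}. x i * \<beta> (gmul (ginv g) h) (y i * u (ginv (gmul (ginv g) h))))"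
    by (rule sum.swap)
  also have "\<dots> = (\<Sum>h\<in>?B. 0)"
  proof (rule sum.cong[OF refl])
    fix h assume h: "h \<in> ?B"
    then have hG: "h \<in> G" and comp: "dd (ginv g) = rr h" using HG d_inv g by auto
    have "gmul (ginv g) h \<notin> G0" using inv_mul_gident_imp_eq[OF g(1) hG] h g(2) by auto
    then show "(\<Sum>i\<in>{1..m}. x i * \<beta> (gmul (ginv g) h) (y i * u (ginv (gmul (ginv g) h)))) = 0"
      using xy mul_closed[OF inv_closed[OF g(1)] hG comp] unfolding galois_coords_def by simp
  qed
  finally show ?thesis by simp
qed

lemma beta_inv_of_fixed:
  assumes g: "g \<in> G" and fixed: "\<beta> g (s * u (ginv g)) = s * u g"
  shows "\<beta> (ginv g) (s * u g) = s * u (ginv g)"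
proof -
  have s: "s * u (ginv g) \<in> E (dd g)" using E_mult_left unit_in_E inv_closed g E_inv by metis
  have "\<beta> (ginv g) (s * u g) = \<beta> (ginv g) (\<beta> g (s * u (ginv g)))"
    using fixed by simp
  also have "\<dots> = \<beta> (gmul (ginv g) g) (s * u (ginv g))"
    using beta_comp[OF inv_closed[OF g] g d_inv[OF g]] s E_inv[OF g] by simp
  also have "\<dots> = \<beta> (dd g) (s * u (ginv g))" by (simp add: gd_def)
  also have "\<dots> = s * u (ginv g)" using beta_gident[OF d_in_gidents[OF g] s] .
  finally show ?thesis .
qed

lemma unit_d_zero_if_fixes_fixed_ring:
  assumes gal: "galois_ext G gmul ginv u \<beta>" and H: "wide_subgroupoid G gmul ginv H"
    and g: "g \<in> G" "g \<notin> H" and fixing: "fixed_ring ginv u \<beta> H \<subseteq> fixed_ring ginv u \<beta> {g}"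
  shows "u (dd g) = 0"
proof -
  obtain m x y where xy: "galois_coords m x y" using gal galois_ext_iff by blast
  have "trace H r * u (ginv g) = \<beta> (ginv g) (trace H r * u g)" for r
  proof -
    have "trace H r \<in> fixed_ring ginv u \<beta> {g}" using trace_in_fixed_ring[OF H] fixing by blast
    then have "\<beta> g (trace H r * u (ginv g)) = trace H r * u g" unfolding fixed_ring_def by simp
    then show ?thesis using beta_inv_of_fixed[OF g(1)] by simp
  qed
  then have "u (dd g) = (\<Sum>i\<in>{1..m}. x i * \<beta> (ginv g) (trace H (y i) * u g))"
    using galois_sum_trace_mult_unit[OF xy H d_in_gidents[OF g(1)]] unit_inv[OF g(1)] by simp
  then show ?thesis using galois_sum_shifted_trace[OF xy H g] by simp
qed

lemma E_trivial_if_unit_d_zero: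
  assumes g: "g \<in> G" and "u (dd g) = 0"
  shows "E g = {0}"
proof -
  have "u g = 0" using beta_unit[OF g] beta_zero[OF g] unit_inv[OF g] assms(2) by simp
  then show ?thesis using unit_mult_left[OF g] E_zero[OF g] by force
qed

lemma mem_if_fixes_fixed_ring:
  assumes "galois_ext G gmul ginv u \<beta>" and "wide_subgroupoid G gmul ginv H"
    and "g \<in> G" "E g \<noteq> {0}" "fixed_ring ginv u \<beta> H \<subseteq> fixed_ring ginv u \<beta> {g}"
  shows "g \<in> H"
  using unit_d_zero_if_fixes_fixed_ring[OF assms(1,2,3) _ assms(5)]
    E_trivial_if_unit_d_zero[OF assms(3)] assms(4) by blast

end

theorem theorem3p3:
  fixes G :: "'g set" and gmul :: "'g \<Rightarrow> 'g \<Rightarrow> 'g" and ginv :: "'g \<Rightarrow> 'g"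
    and smult :: "'k::comm_ring_1 \<Rightarrow> 'r::ring_1 \<Rightarrow> 'r"
    and E :: "'g \<Rightarrow> 'r set" and u :: "'g \<Rightarrow> 'r" and \<beta> :: "'g \<Rightarrow> 'r \<Rightarrow> 'r"
  assumes "groupoid G gmul ginv"
    and "finite G"
    and "k_algebra smult"
    and "unital_action G gmul ginv smult E u \<beta>"
    and "direct_sum_decomp (gidents G gmul ginv) E"
    and "galois_ext G gmul ginv u \<beta>"
    and "\<forall>g\<in>G. Jset ginv E u \<beta> g \<noteq> {0}"
  shows "inj_on (fixed_ring ginv u \<beta>) {H. wide_subgroupoid G gmul ginv H}"
proof -
  interpret groupoid_action G gmul ginv smult E u \<beta>
    using assms by unfold_locales
  have E_nontrivial: "E g \<noteq> {0}" if "g \<in> G" for g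
  proof -
    have "Jset ginv E u \<beta> g \<subseteq> E g" "0 \<in> Jset ginv E u \<beta> g"
      using E_zero[OF that] unfolding Jset_def by auto
    then show ?thesis using assms(7) that by blast
  qed
  have subset: "H' \<subseteq> H"
    if "wide_subgroupoid G gmul ginv H" "wide_subgroupoid G gmul ginv H'"
      and "fixed_ring ginv u \<beta> H = fixed_ring ginv u \<beta> H'" for H H'
  proof
    fix g assume "g \<in> H'"
    then have "fixed_ring ginv u \<beta> H \<subseteq> fixed_ring ginv u \<beta> {g}"
      using that(3) unfolding fixed_ring_def by blast
    moreover have "g \<in> G" using wide_subgroupoid_subset[OF that(2)] \<open>g \<in> H'\<close> by blast
    ultimately show "g \<in> H"
      using mem_if_fixes_fixed_ring[OF assms(6) that(1)] E_nontrivial by blast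
  qed
  show ?thesis
    using subset by (intro inj_onI) (simp add: subset_antisym)
qed

end
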